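(* Let $\alpha\geqslant2$ and $\mathbb{D}\in\{\mathbb{R}^2,\mathbb{R}\times\mathbb{T}\}$. Let $N_1,N_2\in2^{\mathbb{Z}}$, $L_1,L_2\in2^{\mathbb{N}_0}$, $N_{\min}=\min(N_1,N_2)$, $N_{\max}=\max(N_1,N_2)$, $L_{\min}=\min(L_1,L_2)$, $L_{\max}=\max(L_1,L_2)$. Let $f_i=f_{i,N_i,L_i}:\mathbb{R}\times\mathbb{D}^*\to\mathbb{C}$, $i=1,2$, satisfy: $\pi_\xi(\mathrm{supp}f_j)\subseteq I_j$ for intervals $I_j$ with $|I_j|\lesssim N_{\min}$; $|\tau_i-\omega_\alpha(\xi_i,\eta_i)|\lesssim L_i$ for all $(\tau_i,\xi_i,\eta_i)\in\mathrm{supp}f_i$; and $$|\partial_\eta\omega_\alpha(\xi_1,\eta_1)-\partial_\eta\omega_\alpha(\xi-\xi_1,\eta-\eta_1)|\gtrsim N_{\max}^{\frac{\alpha}{2}}$$ whenever $(\xi_1,\eta_1)\in\pi_{\xi,\eta}(\mathrm{supp}f_1)$ and $(\xi-\xi_1,\eta-\eta_1)\in\pi_{\xi,\eta}(\mathrm{supp}f_2)$. Then $$\|f_1*f_2\|_{L^2_{\tau,\xi,\eta}}\lesssim N_{\min}^{\frac12}L_{\min}^{\frac12}C_{1,\mathbb{D}}(L_{\max},N_{\max})\prod_{i=1}^2\|f_i\|_{L^2_{\tau,\xi,\eta}}.$$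
   Context: $\mathbb{T}=\mathbb{R}/(2\pi\mathbb{Z})$; $\mathbb{D}^*=\mathbb{R}^2$ if $\mathbb{D}=\mathbb{R}^2$ and $\mathbb{D}^*=\mathbb{R}\times\mathbb{Z}$ (counting measure in $\eta$) if $\mathbb{D}=\mathbb{R}\times\mathbb{T}$; convolutions and $L^2$ norms are taken with respect to these measures. $\omega_\alpha(\xi,\eta)=\xi|\xi|^\alpha+\frac{\eta^2}{\xi}$, so $\partial_\eta\omega_\alpha=\frac{2\eta}{\xi}$. $\pi_\xi,\pi_{\xi,\eta}$ are the coordinate projections. $C_{1,\mathbb{R}^2}(L,N)=(L/N^{\alpha/2})^{1/2}$ and $C_{1,\mathbb{R}\times\mathbb{T}}(L,N)=\langle L/N^{\alpha/2}\rangle^{1/2}$, $\langle x\rangle=(1+x^2)^{1/2}$. *)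

theory Defs
  imports "HOL-Analysis.Analysis"
begin

definition omega_alpha :: "real \<Rightarrow> real \<Rightarrow> real \<Rightarrow> real" where
  "omega_alpha \<alpha> \<xi> \<eta> = \<xi> * \<bar>\<xi>\<bar> powr \<alpha> + \<eta>\<^sup>2 / \<xi>"

definition d_eta_omega :: "real \<Rightarrow> real \<Rightarrow> real" where
  "d_eta_omega \<xi> \<eta> = 2 * \<eta> / \<xi>"

definition dyadic_Z :: "real \<Rightarrow> bool" where
  "dyadic_Z N \<longleftrightarrow> (\<exists>k::int. N = 2 powr (real_of_int k))"

definition dyadic_N0 :: "real \<Rightarrow> bool" where
  "dyadic_N0 L \<longleftrightarrow> (\<exists>k::nat. L = 2 ^ k)"

definition supp :: "('a::topological_space \<Rightarrow> complex) \<Rightarrow> 'a set" where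
  "supp f = closure {x. f x \<noteq> 0}"

definition conv :: "('a::ab_group_add) measure \<Rightarrow> ('a \<Rightarrow> complex) \<Rightarrow> ('a \<Rightarrow> complex) \<Rightarrow> 'a \<Rightarrow> complex" where
  "conv M f g x = (\<integral>y. f y * g (x - y) \<partial>M)"

definition L2sq :: "'a measure \<Rightarrow> ('a \<Rightarrow> complex) \<Rightarrow> ennreal" where
  "L2sq M f = (\<integral>\<^sup>+ x. ennreal ((cmod (f x))\<^sup>2) \<partial>M)"

text \<open>Measures on R x D^*: D = R^2 gives R x R x R (Lebesgue), D = R x T gives R x R x Z
  (counting measure in eta).\<close>
definition M_R2 :: "(real \<times> real \<times> real) measure" where
  "M_R2 = lborel \<Otimes>\<^sub>M (lborel \<Otimes>\<^sub>M lborel)"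

definition M_RT :: "(real \<times> real \<times> int) measure" where
  "M_RT = lborel \<Otimes>\<^sub>M (lborel \<Otimes>\<^sub>M count_space UNIV)"

definition C1_R2 :: "real \<Rightarrow> real \<Rightarrow> real \<Rightarrow> real" where
  "C1_R2 \<alpha> L N = sqrt (L / N powr (\<alpha>/2))"

definition japanese :: "real \<Rightarrow> real" where
  "japanese x = sqrt (1 + x\<^sup>2)"

definition C1_RT :: "real \<Rightarrow> real \<Rightarrow> real \<Rightarrow> real" where
  "C1_RT \<alpha> L N = sqrt (japanese (L / N powr (\<alpha>/2)))"

end

(*
  Cauchy-Schwarz in the convolution variable, Tonelli and translation invariance give
  ||f1 * f2||^2 <= sup_x |E(x)| ||f1||^2 ||f2||^2 with E(x) = {y. f1 y ~= 0, f2 (x - y) ~= 0}.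
  For y = (tau1, xi1, eta1) in E(x) the two modulation conditions confine tau1 to an
  interval of length 2 min(L1, L2) and force omega(xi1, eta1) + omega(xi - xi1, eta - eta1)
  to lie within L1 + L2 of tau. For fixed xi1 this sum is a quadratic polynomial in eta1
  whose derivative is the difference of the d_eta omega's, so by transversality each of the
  two parts of the sublevel set where that derivative has a fixed sign lies in an interval
  of length <~ (L1 + L2) / N_max^(alpha/2), which contains one more lattice point when eta
  is an integer. Integrating over xi1 in an interval of length <~ N_min bounds |E(x)| by
  N_min L_min C_1(L_max, N_max)^2.
*)
theory Submission
  imports Defs
begin

locale translation_invariant_measure = sigma_finite_measure M
  for M :: "'a::ab_group_add measure" +
  assumes space_eq_UNIV: "space M = UNIV"
    and measurable_diff: "(\<lambda>p. fst p - snd p) \<in> M \<Otimes>\<^sub>M M \<rightarrow>\<^sub>M M"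
    and distr_translate: "distr M M (\<lambda>x. x - y) = M"
begin

lemma measurable_diff_const [measurable]: "(\<lambda>x. x - y) \<in> M \<rightarrow>\<^sub>M M"
  using measurable_comp[OF measurable_Pair[OF measurable_ident_sets measurable_const] measurable_diff]
  by (simp add: o_def space_eq_UNIV)

lemma measurable_const_diff [measurable]: "(\<lambda>y. x - y) \<in> M \<rightarrow>\<^sub>M M"
  using measurable_comp[OF measurable_Pair[OF measurable_const measurable_ident_sets] measurable_diff]
  by (simp add: o_def space_eq_UNIV)

lemma nn_integral_translate:
  assumes "h \<in> borel_measurable M"
  shows "(\<integral>\<^sup>+x. h (x - y) \<partial>M) = (\<integral>\<^sup>+x. h x \<partial>M)"
  using nn_integral_distr[of "\<lambda>x. x - y" M M h] assms by (simp add: distr_translate)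

lemma cmod_conv_squared_le:
  assumes [measurable]: "f1 \<in> borel_measurable M" "f2 \<in> borel_measurable M"
  shows "ennreal ((cmod (conv M f1 f2 x))\<^sup>2)
    \<le> emeasure M {y. f1 y \<noteq> 0 \<and> f2 (x - y) \<noteq> 0}
        * (\<integral>\<^sup>+y. ennreal ((cmod (f1 y))\<^sup>2) * ennreal ((cmod (f2 (x - y)))\<^sup>2) \<partial>M)"
proof -
  define g where "g y = ennreal (cmod (f1 y) * cmod (f2 (x - y)))" for y
  define Z where "Z = {y. f1 y \<noteq> 0 \<and> f2 (x - y) \<noteq> 0}"
  have [measurable]: "g \<in> borel_measurable M" unfolding g_def by measurable
  have [measurable]: "Z \<in> sets M"
  proof -
    have "{y \<in> space M. f1 y \<noteq> 0 \<and> f2 (x - y) \<noteq> 0} \<in> sets M" by measurable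
    then show ?thesis by (simp add: Z_def space_eq_UNIV)
  qed
  have "ennreal (cmod (conv M f1 f2 x)) \<le> (\<integral>\<^sup>+y. g y \<partial>M)"
  proof (cases "integrable M (\<lambda>y. f1 y * f2 (x - y))")
    case True
    from integral_norm_bound_ennreal[OF True] show ?thesis
      by (simp add: conv_def g_def norm_mult)
  qed (simp add: conv_def not_integrable_integral_eq)
  also have "\<dots> = (\<integral>\<^sup>+y. g y * indicator Z y \<partial>M)"
    by (rule nn_integral_cong) (auto simp: g_def Z_def indicator_def)
  finally have "ennreal (cmod (conv M f1 f2 x)) \<le> (\<integral>\<^sup>+y. g y * indicator Z y \<partial>M)" .
  from power_mono[OF this zero_le, of 2]
  have "ennreal ((cmod (conv M f1 f2 x))\<^sup>2) \<le> (\<integral>\<^sup>+y. g y * indicator Z y \<partial>M)\<^sup>2"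
    by (simp add: ennreal_power)
  also have "\<dots> \<le> (\<integral>\<^sup>+y. g y ^ 2 \<partial>M) * (\<integral>\<^sup>+y. (indicator Z y :: ennreal) ^ 2 \<partial>M)"
    by (rule Cauchy_Schwarz_nn_integral) measurable
  also have "(\<integral>\<^sup>+y. (indicator Z y :: ennreal) ^ 2 \<partial>M) = emeasure M Z"
  proof -
    have "(indicator Z y :: ennreal) ^ 2 = indicator Z y" for y by (simp add: indicator_def)
    then show ?thesis by simp
  qed
  also have "(\<integral>\<^sup>+y. g y ^ 2 \<partial>M)
      = (\<integral>\<^sup>+y. ennreal ((cmod (f1 y))\<^sup>2) * ennreal ((cmod (f2 (x - y)))\<^sup>2) \<partial>M)"
    by (rule nn_integral_cong) (simp add: g_def ennreal_mult'' power_mult_distrib ennreal_power)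
  finally show ?thesis by (simp only: Z_def mult.commute)
qed

lemma L2sq_conv_le:
  assumes [measurable]: "f1 \<in> borel_measurable M" "f2 \<in> borel_measurable M"
    and bound: "\<And>x. emeasure M {y. f1 y \<noteq> 0 \<and> f2 (x - y) \<noteq> 0} \<le> K"
  shows "L2sq M (conv M f1 f2) \<le> K * L2sq M f1 * L2sq M f2"
proof -
  interpret P: pair_sigma_finite M M ..
  define F where "F x y = ennreal ((cmod (f1 y))\<^sup>2) * ennreal ((cmod (f2 (x - y)))\<^sup>2)" for x y
  have [measurable]: "(\<lambda>p. fst p - snd p) \<in> M \<Otimes>\<^sub>M M \<rightarrow>\<^sub>M M"
    by (rule measurable_diff)
  have F_measurable [measurable]: "(\<lambda>p. F (fst p) (snd p)) \<in> borel_measurable (M \<Otimes>\<^sub>M M)"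
    unfolding F_def by measurable
  have "L2sq M (conv M f1 f2) \<le> (\<integral>\<^sup>+x. K * (\<integral>\<^sup>+y. F x y \<partial>M) \<partial>M)"
    unfolding L2sq_def
  proof (rule nn_integral_mono)
    fix x
    have "ennreal ((cmod (conv M f1 f2 x))\<^sup>2)
        \<le> emeasure M {y. f1 y \<noteq> 0 \<and> f2 (x - y) \<noteq> 0} * (\<integral>\<^sup>+y. F x y \<partial>M)"
      unfolding F_def by (rule cmod_conv_squared_le[OF assms(1,2)])
    also have "\<dots> \<le> K * (\<integral>\<^sup>+y. F x y \<partial>M)"
      by (rule mult_right_mono[OF bound]) simp
    finally show "ennreal ((cmod (conv M f1 f2 x))\<^sup>2) \<le> K * (\<integral>\<^sup>+y. F x y \<partial>M)" .
  qed
  also have "\<dots> = K * (\<integral>\<^sup>+x. (\<integral>\<^sup>+y. F x y \<partial>M) \<partial>M)"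
    using borel_measurable_nn_integral_fst[OF F_measurable] by (intro nn_integral_cmult) simp
  also have "(\<integral>\<^sup>+x. (\<integral>\<^sup>+y. F x y \<partial>M) \<partial>M) = (\<integral>\<^sup>+y. (\<integral>\<^sup>+x. F x y \<partial>M) \<partial>M)"
    using P.Fubini[OF F_measurable] by simp
  also have "\<dots> = (\<integral>\<^sup>+y. ennreal ((cmod (f1 y))\<^sup>2) * L2sq M f2 \<partial>M)"
  proof (rule nn_integral_cong)
    fix y
    have "(\<integral>\<^sup>+x. F x y \<partial>M) = ennreal ((cmod (f1 y))\<^sup>2) * (\<integral>\<^sup>+x. ennreal ((cmod (f2 (x - y)))\<^sup>2) \<partial>M)"
      unfolding F_def by (rule nn_integral_cmult) measurable
    then show "(\<integral>\<^sup>+x. F x y \<partial>M) = ennreal ((cmod (f1 y))\<^sup>2) * L2sq M f2"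
      unfolding L2sq_def by (simp add: nn_integral_translate[where h = "\<lambda>x. ennreal ((cmod (f2 x))\<^sup>2)"])
  qed
  also have "\<dots> = L2sq M f1 * L2sq M f2"
    unfolding L2sq_def by (rule nn_integral_multc) measurable
  finally show ?thesis by (simp add: mult.assoc)
qed

end


lemma translation_invariant_measure_lborel: "translation_invariant_measure (lborel :: real measure)"
proof (intro translation_invariant_measure.intro translation_invariant_measure_axioms.intro)
  show "sigma_finite_measure (lborel :: real measure)"
    by (rule lborel.sigma_finite_measure_axioms)
  show "space (lborel :: real measure) = UNIV"
    by simp
  show "(\<lambda>p. fst p - snd p) \<in> lborel \<Otimes>\<^sub>M lborel \<rightarrow>\<^sub>M (lborel :: real measure)"
    by measurable
  show "distr lborel lborel (\<lambda>x::real. x - y) = lborel" for y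
  proof -
    have "distr lborel lborel (\<lambda>x::real. x - y) = distr lborel borel ((+) (- y))"
      by (rule distr_cong) auto
    then show ?thesis by (simp add: lborel_distr_plus)
  qed
qed

lemma translation_invariant_measure_count_space_int:
  "translation_invariant_measure (count_space (UNIV :: int set))"
proof (intro translation_invariant_measure.intro translation_invariant_measure_axioms.intro)
  show "sigma_finite_measure (count_space (UNIV :: int set))"
    by (rule sigma_finite_measure_count_space)
  show "space (count_space (UNIV :: int set)) = UNIV"
    by simp
  show "(\<lambda>p. fst p - snd p) \<in> count_space UNIV \<Otimes>\<^sub>M count_space UNIV \<rightarrow>\<^sub>M count_space (UNIV :: int set)"
    by (simp add: pair_measure_countable)
  have "bij (\<lambda>x::int. x - y)" for y
    by (rule bij_betw_byWitness[where f' = "\<lambda>x. x + y"]) auto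
  then show "distr (count_space UNIV) (count_space UNIV) (\<lambda>x::int. x - y) = count_space UNIV" for y
    by (rule distr_bij_count_space)
qed

lemma translation_invariant_measure_pair:
  assumes "translation_invariant_measure M1" and "translation_invariant_measure M2"
  shows "translation_invariant_measure (M1 \<Otimes>\<^sub>M M2)"
proof -
  interpret M1: translation_invariant_measure M1 by fact
  interpret M2: translation_invariant_measure M2 by fact
  interpret P: pair_sigma_finite M1 M2 ..
  show ?thesis
  proof (intro translation_invariant_measure.intro translation_invariant_measure_axioms.intro)
    show "sigma_finite_measure (M1 \<Otimes>\<^sub>M M2)"
      by (rule P.sigma_finite_measure_axioms)
    show "space (M1 \<Otimes>\<^sub>M M2) = UNIV"
      by (simp add: space_pair_measure M1.space_eq_UNIV M2.space_eq_UNIV)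
    have "(\<lambda>p. (fst (fst p), fst (snd p))) \<in> (M1 \<Otimes>\<^sub>M M2) \<Otimes>\<^sub>M (M1 \<Otimes>\<^sub>M M2) \<rightarrow>\<^sub>M M1 \<Otimes>\<^sub>M M1"
      by measurable
    from measurable_compose[OF this M1.measurable_diff]
    have "(\<lambda>p. fst (fst p) - fst (snd p)) \<in> (M1 \<Otimes>\<^sub>M M2) \<Otimes>\<^sub>M (M1 \<Otimes>\<^sub>M M2) \<rightarrow>\<^sub>M M1" by simp
    moreover have "(\<lambda>p. (snd (fst p), snd (snd p))) \<in> (M1 \<Otimes>\<^sub>M M2) \<Otimes>\<^sub>M (M1 \<Otimes>\<^sub>M M2) \<rightarrow>\<^sub>M M2 \<Otimes>\<^sub>M M2"
      by measurable
    from measurable_compose[OF this M2.measurable_diff]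
    have "(\<lambda>p. snd (fst p) - snd (snd p)) \<in> (M1 \<Otimes>\<^sub>M M2) \<Otimes>\<^sub>M (M1 \<Otimes>\<^sub>M M2) \<rightarrow>\<^sub>M M2" by simp
    ultimately show "(\<lambda>p. fst p - snd p) \<in> (M1 \<Otimes>\<^sub>M M2) \<Otimes>\<^sub>M (M1 \<Otimes>\<^sub>M M2) \<rightarrow>\<^sub>M M1 \<Otimes>\<^sub>M M2"
      by (simp add: minus_prod_def measurable_Pair)
    fix y :: "'a \<times> 'b"
    have translate_eq: "(\<lambda>x. x - y) = (\<lambda>(u, v). (u - fst y, v - snd y))"
      by (auto simp: fun_eq_iff minus_prod_def)
    have "distr M1 M1 (\<lambda>u. u - fst y) \<Otimes>\<^sub>M distr M2 M2 (\<lambda>v. v - snd y)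
        = distr (M1 \<Otimes>\<^sub>M M2) (M1 \<Otimes>\<^sub>M M2) (\<lambda>(u, v). (u - fst y, v - snd y))"
      by (rule pair_measure_distr)
        (simp_all add: M2.distr_translate M2.sigma_finite_measure_axioms)
    then show "distr (M1 \<Otimes>\<^sub>M M2) (M1 \<Otimes>\<^sub>M M2) (\<lambda>x. x - y) = M1 \<Otimes>\<^sub>M M2"
      unfolding translate_eq by (simp add: M1.distr_translate M2.distr_translate)
  qed
qed

lemma omega_sum_secant:
  "(omega_alpha \<alpha> p t + omega_alpha \<alpha> q (e - t)) - (omega_alpha \<alpha> p s + omega_alpha \<alpha> q (e - s))
    = (t - s) * ((d_eta_omega p s - d_eta_omega q (e - s)) + (d_eta_omega p t - d_eta_omega q (e - t))) / 2"
proof -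
  have omega_sum: "omega_alpha \<alpha> p r + omega_alpha \<alpha> q (e - r)
      = (p * \<bar>p\<bar> powr \<alpha> + q * \<bar>q\<bar> powr \<alpha>) + (r\<^sup>2 * inverse p + (e - r)\<^sup>2 * inverse q)" for r
    by (simp add: omega_alpha_def divide_inverse)
  \<comment> \<open>Writing the quadratic in terms of \<open>inverse p\<close>, \<open>inverse q\<close> avoids a case split on
    \<open>p = 0\<close> or \<open>q = 0\<close>, where the junk value \<open>x / 0 = 0\<close> still satisfies the identity.\<close>
  have d_eta_diff: "d_eta_omega p r - d_eta_omega q (e - r) = 2 * r * inverse p - 2 * (e - r) * inverse q"
    for r
    by (simp add: d_eta_omega_def divide_inverse)
  have "(t\<^sup>2 * a + (e - t)\<^sup>2 * b) - (s\<^sup>2 * a + (e - s)\<^sup>2 * b)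
      = (t - s) * ((2 * s * a - 2 * (e - s) * b) + (2 * t * a - 2 * (e - t) * b)) / 2" for a b :: real
    by (simp add: power2_eq_square algebra_simps)
  then show ?thesis
    unfolding omega_sum d_eta_diff add_diff_cancel_left .
qed

lemma subset_cball_if_dist_le:
  fixes A :: "'a::metric_space set"
  assumes "\<And>s t. s \<in> A \<Longrightarrow> t \<in> A \<Longrightarrow> dist s t \<le> r"
  shows "\<exists>u. A \<subseteq> cball u r"
proof (cases "A = {}")
  case False
  then obtain u where "u \<in> A" by blast
  with assms have "A \<subseteq> cball u r" by auto
  then show ?thesis ..
qed simp

lemma sublevel_set_subset_two_cballs:
  fixes \<Phi> \<Phi>' :: "real \<Rightarrow> real"
  assumes secant: "\<And>s t. \<Phi> t - \<Phi> s = (t - s) * (\<Phi>' s + \<Phi>' t) / 2"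
    and "c > 0"
  shows "\<exists>u v. {s. \<bar>\<tau> - \<Phi> s\<bar> \<le> \<delta> \<and> c \<le> \<bar>\<Phi>' s\<bar>} \<subseteq> cball u (2 * \<delta> / c) \<union> cball v (2 * \<delta> / c)"
proof -
  have close: "dist s t \<le> 2 * \<delta> / c"
    if "\<bar>\<tau> - \<Phi> s\<bar> \<le> \<delta>" "\<bar>\<tau> - \<Phi> t\<bar> \<le> \<delta>" "2 * c \<le> \<bar>\<Phi>' s + \<Phi>' t\<bar>" for s t
  proof -
    have "\<bar>t - s\<bar> * (2 * c) \<le> \<bar>t - s\<bar> * \<bar>\<Phi>' s + \<Phi>' t\<bar>"
      using that(3) by (intro mult_left_mono) auto
    also have "\<dots> = 2 * \<bar>\<Phi> t - \<Phi> s\<bar>"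
      by (simp add: secant abs_mult)
    also have "\<dots> \<le> 2 * (\<bar>\<tau> - \<Phi> s\<bar> + \<bar>\<tau> - \<Phi> t\<bar>)"
      using abs_triangle_ineq[of "\<tau> - \<Phi> s" "\<Phi> t - \<tau>"] by (simp add: abs_minus_commute)
    also have "\<dots> \<le> 4 * \<delta>"
      using that(1,2) by simp
    finally show ?thesis
      using \<open>c > 0\<close> by (simp add: dist_real_def abs_minus_commute field_simps)
  qed
  define Pos where "Pos = {s. \<bar>\<tau> - \<Phi> s\<bar> \<le> \<delta> \<and> c \<le> \<Phi>' s}"
  define Neg where "Neg = {s. \<bar>\<tau> - \<Phi> s\<bar> \<le> \<delta> \<and> \<Phi>' s \<le> - c}"
  have "\<exists>u. Pos \<subseteq> cball u (2 * \<delta> / c)"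
    by (rule subset_cball_if_dist_le, rule close) (auto simp: Pos_def)
  moreover have "\<exists>v. Neg \<subseteq> cball v (2 * \<delta> / c)"
    by (rule subset_cball_if_dist_le, rule close) (auto simp: Neg_def)
  moreover have "{s. \<bar>\<tau> - \<Phi> s\<bar> \<le> \<delta> \<and> c \<le> \<bar>\<Phi>' s\<bar>} \<subseteq> Pos \<union> Neg"
    by (auto simp: Pos_def Neg_def)
  ultimately show ?thesis by blast
qed

lemma emeasure_lborel_centred_Icc: "emeasure lborel {w - l .. w + l} = ennreal (2 * l)"
  for w l :: real
  by (simp add: emeasure_lborel_Icc_eq ennreal_neg)

lemma emeasure_lborel_two_slabs_le:
  "emeasure lborel {t::real. \<bar>t - w1\<bar> \<le> l1 \<and> \<bar>\<tau> - t - w2\<bar> \<le> l2} \<le> ennreal (2 * min l1 l2)"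
proof -
  let ?S = "{t::real. \<bar>t - w1\<bar> \<le> l1 \<and> \<bar>\<tau> - t - w2\<bar> \<le> l2}"
  have "emeasure lborel ?S \<le> emeasure lborel {w1 - l1 .. w1 + l1}"
    by (intro emeasure_mono) auto
  moreover have "emeasure lborel ?S \<le> emeasure lborel {(\<tau> - w2) - l2 .. (\<tau> - w2) + l2}"
    by (intro emeasure_mono) auto
  moreover have "a \<le> ennreal (2 * l1) \<Longrightarrow> a \<le> ennreal (2 * l2) \<Longrightarrow> a \<le> ennreal (2 * min l1 l2)"
    for a :: ennreal
    by (simp add: min_def)
  ultimately show ?thesis
    unfolding emeasure_lborel_centred_Icc by blast
qed

lemma emeasure_preimage_cball_real_le:
  "emeasure lborel ((\<lambda>x::real. x) -` cball u D) \<le> ennreal (2 * D)"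
  by (simp add: cball_eq_atLeastAtMost emeasure_lborel_Icc_eq)

lemma emeasure_preimage_cball_int_le:
  assumes "D \<ge> 0"
  shows "emeasure (count_space UNIV) (real_of_int -` cball u D) \<le> ennreal (2 * D + 1)"
proof -
  have preimage_eq: "real_of_int -` cball u D = {\<lceil>u - D\<rceil> .. \<lfloor>u + D\<rfloor>}"
    by (auto simp: cball_eq_atLeastAtMost ceiling_le_iff le_floor_iff)
  have "real_of_int (\<lfloor>u + D\<rfloor> - \<lceil>u - D\<rceil> + 1) \<le> 2 * D + 1"
    using of_int_floor_le[of "u + D"] le_of_int_ceiling[of "u - D"] by (simp; linarith)
  then have "real (nat (\<lfloor>u + D\<rfloor> - \<lceil>u - D\<rceil> + 1)) \<le> 2 * D + 1"
    using assms by linarith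
  then show ?thesis
    unfolding preimage_eq by (simp add: ennreal_of_nat_eq_real_of_nat ennreal_leI)
qed


lemma emeasure_resonant_fibre_le:
  fixes N :: "'b measure" and \<iota> :: "'b \<Rightarrow> real"
  assumes space_N: "space N = UNIV" and \<iota>_measurable: "\<iota> \<in> borel_measurable N"
    and W: "\<And>u D. D \<ge> 0 \<Longrightarrow> emeasure N (\<iota> -` cball u D) \<le> ennreal (W D)"
    and "c > 0" and "\<delta> \<ge> 0"
  shows "emeasure N {\<eta>1. \<bar>\<tau> - (omega_alpha \<alpha> p (\<iota> \<eta>1) + omega_alpha \<alpha> q (e - \<iota> \<eta>1))\<bar> \<le> \<delta>
      \<and> c \<le> \<bar>d_eta_omega p (\<iota> \<eta>1) - d_eta_omega q (e - \<iota> \<eta>1)\<bar>} \<le> 2 * ennreal (W (2 * \<delta> / c))"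
proof -
  define D where "D = 2 * \<delta> / c"
  have "D \<ge> 0" using \<open>c > 0\<close> \<open>\<delta> \<ge> 0\<close> by (simp add: D_def)
  obtain u v where uv: "{s. \<bar>\<tau> - (omega_alpha \<alpha> p s + omega_alpha \<alpha> q (e - s))\<bar> \<le> \<delta>
      \<and> c \<le> \<bar>d_eta_omega p s - d_eta_omega q (e - s)\<bar>} \<subseteq> cball u D \<union> cball v D"
    using sublevel_set_subset_two_cballs[where \<Phi> = "\<lambda>s. omega_alpha \<alpha> p s + omega_alpha \<alpha> q (e - s)"
        and \<Phi>' = "\<lambda>s. d_eta_omega p s - d_eta_omega q (e - s)", OF omega_sum_secant \<open>c > 0\<close>]
    unfolding D_def by blast
  have preimage_sets: "\<iota> -` cball w D \<in> sets N" for w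
    using measurable_sets[OF \<iota>_measurable, of "cball w D"] by (simp add: space_N)
  have "emeasure N {\<eta>1. \<bar>\<tau> - (omega_alpha \<alpha> p (\<iota> \<eta>1) + omega_alpha \<alpha> q (e - \<iota> \<eta>1))\<bar> \<le> \<delta>
      \<and> c \<le> \<bar>d_eta_omega p (\<iota> \<eta>1) - d_eta_omega q (e - \<iota> \<eta>1)\<bar>}
      \<le> emeasure N (\<iota> -` cball u D \<union> \<iota> -` cball v D)"
    using uv preimage_sets by (intro emeasure_mono) blast+
  also have "\<dots> \<le> emeasure N (\<iota> -` cball u D) + emeasure N (\<iota> -` cball v D)"
    using preimage_sets[of u] preimage_sets[of v] by (rule emeasure_subadditive)
  also have "\<dots> \<le> ennreal (W D) + ennreal (W D)"
    using W[OF \<open>D \<ge> 0\<close>, of u] W[OF \<open>D \<ge> 0\<close>, of v] by (rule add_mono)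
  also have "\<dots> = 2 * ennreal (W D)"
    by (rule mult_2[symmetric])
  finally show ?thesis
    unfolding D_def .
qed

lemma borel_measurable_omega_alpha [measurable]:
  assumes [measurable]: "f \<in> borel_measurable M" "g \<in> borel_measurable M"
  shows "(\<lambda>x. omega_alpha \<alpha> (f x) (g x)) \<in> borel_measurable M"
  unfolding omega_alpha_def by measurable

lemma borel_measurable_d_eta_omega [measurable]:
  assumes [measurable]: "f \<in> borel_measurable M" "g \<in> borel_measurable M"
  shows "(\<lambda>x. d_eta_omega (f x) (g x)) \<in> borel_measurable M"
  unfolding d_eta_omega_def by measurable

definition interaction_set ::
    "real \<Rightarrow> ('b::ab_group_add \<Rightarrow> real) \<Rightarrow> real set \<Rightarrow> real \<Rightarrow> real \<Rightarrow> real \<Rightarrow> real \<times> real \<times> 'b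
      \<Rightarrow> (real \<times> real \<times> 'b) set" where
  "interaction_set \<alpha> \<iota> I l1 l2 c = (\<lambda>(\<tau>, \<xi>, \<eta>). {(\<tau>1, \<xi>1, \<eta>1). \<xi>1 \<in> I
      \<and> \<bar>\<tau>1 - omega_alpha \<alpha> \<xi>1 (\<iota> \<eta>1)\<bar> \<le> l1
      \<and> \<bar>(\<tau> - \<tau>1) - omega_alpha \<alpha> (\<xi> - \<xi>1) (\<iota> (\<eta> - \<eta>1))\<bar> \<le> l2
      \<and> c \<le> \<bar>d_eta_omega \<xi>1 (\<iota> \<eta>1) - d_eta_omega (\<xi> - \<xi>1) (\<iota> (\<eta> - \<eta>1))\<bar>})"

definition resonant_set ::
    "real \<Rightarrow> ('b::ab_group_add \<Rightarrow> real) \<Rightarrow> real set \<Rightarrow> real \<Rightarrow> real \<Rightarrow> real \<times> real \<times> 'b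
      \<Rightarrow> (real \<times> 'b) set" where
  "resonant_set \<alpha> \<iota> I l c = (\<lambda>(\<tau>, \<xi>, \<eta>). {(\<xi>1, \<eta>1). \<xi>1 \<in> I
      \<and> \<bar>\<tau> - (omega_alpha \<alpha> \<xi>1 (\<iota> \<eta>1) + omega_alpha \<alpha> (\<xi> - \<xi>1) (\<iota> \<eta> - \<iota> \<eta>1))\<bar> \<le> l
      \<and> c \<le> \<bar>d_eta_omega \<xi>1 (\<iota> \<eta>1) - d_eta_omega (\<xi> - \<xi>1) (\<iota> \<eta> - \<iota> \<eta>1)\<bar>})"

lemma emeasure_interaction_set_slice_le:
  assumes \<iota>_diff: "\<And>a b. \<iota> (a - b) = \<iota> a - \<iota> b"
  shows "emeasure lborel {\<tau>1. (\<tau>1, \<xi>1, \<eta>1) \<in> interaction_set \<alpha> \<iota> I l1 l2 c (\<tau>, \<xi>, \<eta>)}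
    \<le> ennreal (2 * min l1 l2) * indicator (resonant_set \<alpha> \<iota> I (l1 + l2) c (\<tau>, \<xi>, \<eta>)) (\<xi>1, \<eta>1)"
proof -
  define w1 where "w1 = omega_alpha \<alpha> \<xi>1 (\<iota> \<eta>1)"
  define w2 where "w2 = omega_alpha \<alpha> (\<xi> - \<xi>1) (\<iota> \<eta> - \<iota> \<eta>1)"
  have slice_eq: "{\<tau>1. (\<tau>1, \<xi>1, \<eta>1) \<in> interaction_set \<alpha> \<iota> I l1 l2 c (\<tau>, \<xi>, \<eta>)}
      = {t. \<bar>t - w1\<bar> \<le> l1 \<and> \<bar>\<tau> - t - w2\<bar> \<le> l2 \<and> \<xi>1 \<in> I
          \<and> c \<le> \<bar>d_eta_omega \<xi>1 (\<iota> \<eta>1) - d_eta_omega (\<xi> - \<xi>1) (\<iota> \<eta> - \<iota> \<eta>1)\<bar>}"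
    by (auto simp: interaction_set_def w1_def w2_def \<iota>_diff)
  show ?thesis
  proof (cases "(\<xi>1, \<eta>1) \<in> resonant_set \<alpha> \<iota> I (l1 + l2) c (\<tau>, \<xi>, \<eta>)")
    case True
    have "emeasure lborel {t. \<bar>t - w1\<bar> \<le> l1 \<and> \<bar>\<tau> - t - w2\<bar> \<le> l2 \<and> \<xi>1 \<in> I
          \<and> c \<le> \<bar>d_eta_omega \<xi>1 (\<iota> \<eta>1) - d_eta_omega (\<xi> - \<xi>1) (\<iota> \<eta> - \<iota> \<eta>1)\<bar>}
        \<le> emeasure lborel {t. \<bar>t - w1\<bar> \<le> l1 \<and> \<bar>\<tau> - t - w2\<bar> \<le> l2}"
      by (intro emeasure_mono) auto
    also have "\<dots> \<le> ennreal (2 * min l1 l2)"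
      by (rule emeasure_lborel_two_slabs_le)
    finally show ?thesis
      using True by (simp add: slice_eq)
  next
    case False
    then have "\<not> (\<xi>1 \<in> I \<and> \<bar>\<tau> - (w1 + w2)\<bar> \<le> l1 + l2
        \<and> c \<le> \<bar>d_eta_omega \<xi>1 (\<iota> \<eta>1) - d_eta_omega (\<xi> - \<xi>1) (\<iota> \<eta> - \<iota> \<eta>1)\<bar>)"
      by (simp add: resonant_set_def w1_def w2_def)
    moreover have "\<bar>\<tau> - (w1 + w2)\<bar> \<le> l1 + l2" if "\<bar>t - w1\<bar> \<le> l1" "\<bar>\<tau> - t - w2\<bar> \<le> l2" for t
      using that by linarith
    ultimately have empty: "{t. \<bar>t - w1\<bar> \<le> l1 \<and> \<bar>\<tau> - t - w2\<bar> \<le> l2 \<and> \<xi>1 \<in> I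
        \<and> c \<le> \<bar>d_eta_omega \<xi>1 (\<iota> \<eta>1) - d_eta_omega (\<xi> - \<xi>1) (\<iota> \<eta> - \<iota> \<eta>1)\<bar>} = {}"
      by blast
    show ?thesis
      unfolding slice_eq empty by simp
  qed
qed

context translation_invariant_measure
begin

lemma interaction_set_in_sets:
  assumes [measurable]: "\<iota> \<in> borel_measurable M" "I \<in> sets borel"
  shows "interaction_set \<alpha> \<iota> I l1 l2 c x \<in> sets (lborel \<Otimes>\<^sub>M (lborel \<Otimes>\<^sub>M M))"
proof -
  obtain \<tau> \<xi> \<eta> where x: "x = (\<tau>, \<xi>, \<eta>)" by (cases x)
  have "{p \<in> space (lborel \<Otimes>\<^sub>M (lborel \<Otimes>\<^sub>M M)). case p of (\<tau>1, \<xi>1, \<eta>1) \<Rightarrow> \<xi>1 \<in> I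
      \<and> \<bar>\<tau>1 - omega_alpha \<alpha> \<xi>1 (\<iota> \<eta>1)\<bar> \<le> l1
      \<and> \<bar>(\<tau> - \<tau>1) - omega_alpha \<alpha> (\<xi> - \<xi>1) (\<iota> (\<eta> - \<eta>1))\<bar> \<le> l2
      \<and> c \<le> \<bar>d_eta_omega \<xi>1 (\<iota> \<eta>1) - d_eta_omega (\<xi> - \<xi>1) (\<iota> (\<eta> - \<eta>1))\<bar>}
      \<in> sets (lborel \<Otimes>\<^sub>M (lborel \<Otimes>\<^sub>M M))"
    by measurable
  then show ?thesis
    by (simp add: x interaction_set_def space_pair_measure space_eq_UNIV)
qed

lemma resonant_set_in_sets:
  assumes [measurable]: "\<iota> \<in> borel_measurable M" "I \<in> sets borel"
  shows "resonant_set \<alpha> \<iota> I l c x \<in> sets (lborel \<Otimes>\<^sub>M M)"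
proof -
  obtain \<tau> \<xi> \<eta> where x: "x = (\<tau>, \<xi>, \<eta>)" by (cases x)
  have "{p \<in> space (lborel \<Otimes>\<^sub>M M). case p of (\<xi>1, \<eta>1) \<Rightarrow> \<xi>1 \<in> I
      \<and> \<bar>\<tau> - (omega_alpha \<alpha> \<xi>1 (\<iota> \<eta>1) + omega_alpha \<alpha> (\<xi> - \<xi>1) (\<iota> \<eta> - \<iota> \<eta>1))\<bar> \<le> l
      \<and> c \<le> \<bar>d_eta_omega \<xi>1 (\<iota> \<eta>1) - d_eta_omega (\<xi> - \<xi>1) (\<iota> \<eta> - \<iota> \<eta>1)\<bar>} \<in> sets (lborel \<Otimes>\<^sub>M M)"
    by measurable
  then show ?thesis
    by (simp add: x resonant_set_def space_pair_measure space_eq_UNIV)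
qed

lemma nn_integral_resonant_set_fibre_le:
  assumes \<iota>_measurable [measurable]: "\<iota> \<in> borel_measurable M" and [measurable]: "I \<in> sets borel"
    and W: "\<And>u D. D \<ge> 0 \<Longrightarrow> emeasure M (\<iota> -` cball u D) \<le> ennreal (W D)"
    and "c > 0" and "l \<ge> 0"
  shows "(\<integral>\<^sup>+\<eta>1. indicator (resonant_set \<alpha> \<iota> I l c x) (\<xi>1, \<eta>1) \<partial>M)
    \<le> indicator I \<xi>1 * (2 * ennreal (W (2 * l / c)))"
proof (cases "\<xi>1 \<in> I")
  case True
  obtain \<tau> \<xi> \<eta> where x: "x = (\<tau>, \<xi>, \<eta>)" by (cases x)
  let ?G = "resonant_set \<alpha> \<iota> I l c x"
  have "(\<integral>\<^sup>+\<eta>1. indicator ?G (\<xi>1, \<eta>1) \<partial>M) = (\<integral>\<^sup>+\<eta>1. indicator (Pair \<xi>1 -` ?G) \<eta>1 \<partial>M)"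
    by (rule nn_integral_cong) (simp add: indicator_def)
  also have "\<dots> = emeasure M (Pair \<xi>1 -` ?G)"
    by (rule nn_integral_indicator) (rule sets_Pair1, rule resonant_set_in_sets; measurable)
  also have "Pair \<xi>1 -` ?G = {\<eta>1.
      \<bar>\<tau> - (omega_alpha \<alpha> \<xi>1 (\<iota> \<eta>1) + omega_alpha \<alpha> (\<xi> - \<xi>1) (\<iota> \<eta> - \<iota> \<eta>1))\<bar> \<le> l
      \<and> c \<le> \<bar>d_eta_omega \<xi>1 (\<iota> \<eta>1) - d_eta_omega (\<xi> - \<xi>1) (\<iota> \<eta> - \<iota> \<eta>1)\<bar>}"
    using True by (auto simp: resonant_set_def x)
  also have "emeasure M \<dots> \<le> 2 * ennreal (W (2 * l / c))"
    by (rule emeasure_resonant_fibre_le[OF space_eq_UNIV \<iota>_measurable W \<open>c > 0\<close> \<open>l \<ge> 0\<close>])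
  finally show ?thesis
    using True by simp
qed (simp add: resonant_set_def split: prod.split)

lemma emeasure_interaction_set_le:
  assumes [measurable]: "\<iota> \<in> borel_measurable M" "I \<in> sets borel"
    and \<iota>_diff: "\<And>a b. \<iota> (a - b) = \<iota> a - \<iota> b"
    and W: "\<And>u D. D \<ge> 0 \<Longrightarrow> emeasure M (\<iota> -` cball u D) \<le> ennreal (W D)"
    and "c > 0" and "l1 \<ge> 0" and "l2 \<ge> 0"
  shows "emeasure (lborel \<Otimes>\<^sub>M (lborel \<Otimes>\<^sub>M M)) (interaction_set \<alpha> \<iota> I l1 l2 c x)
    \<le> ennreal (2 * min l1 l2) * emeasure lborel I * (2 * ennreal (W (2 * (l1 + l2) / c)))"
proof -
  interpret P2: pair_sigma_finite lborel M ..
  interpret P: pair_sigma_finite lborel "lborel \<Otimes>\<^sub>M M" ..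
  obtain \<tau> \<xi> \<eta> where x: "x = (\<tau>, \<xi>, \<eta>)" by (cases x)
  let ?B = "interaction_set \<alpha> \<iota> I l1 l2 c x"
  let ?G = "resonant_set \<alpha> \<iota> I (l1 + l2) c x"
  have [measurable]: "?G \<in> sets (lborel \<Otimes>\<^sub>M M)"
    by (rule resonant_set_in_sets) measurable
  have "emeasure (lborel \<Otimes>\<^sub>M (lborel \<Otimes>\<^sub>M M)) ?B
      = (\<integral>\<^sup>+y. emeasure lborel ((\<lambda>\<tau>1. (\<tau>1, y)) -` ?B) \<partial>(lborel \<Otimes>\<^sub>M M))"
    by (rule P.emeasure_pair_measure_alt2) (rule interaction_set_in_sets; measurable)
  also have "\<dots> \<le> (\<integral>\<^sup>+y. ennreal (2 * min l1 l2) * indicator ?G y \<partial>(lborel \<Otimes>\<^sub>M M))"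
  proof (rule nn_integral_mono)
    fix y :: "real \<times> 'a"
    obtain \<xi>1 \<eta>1 where y: "y = (\<xi>1, \<eta>1)" by (cases y)
    have "emeasure lborel {\<tau>1. (\<tau>1, \<xi>1, \<eta>1) \<in> ?B} \<le> ennreal (2 * min l1 l2) * indicator ?G (\<xi>1, \<eta>1)"
      unfolding x by (rule emeasure_interaction_set_slice_le[OF \<iota>_diff])
    then show "emeasure lborel ((\<lambda>\<tau>1. (\<tau>1, y)) -` ?B) \<le> ennreal (2 * min l1 l2) * indicator ?G y"
      by (simp add: y vimage_def)
  qed
  also have "\<dots> = ennreal (2 * min l1 l2) * (\<integral>\<^sup>+\<xi>1. (\<integral>\<^sup>+\<eta>1. indicator ?G (\<xi>1, \<eta>1) \<partial>M) \<partial>lborel)"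
    using nn_integral_fst[of "indicator ?G"] by (simp add: nn_integral_cmult)
  also have "\<dots> \<le> ennreal (2 * min l1 l2)
      * (\<integral>\<^sup>+\<xi>1. indicator I \<xi>1 * (2 * ennreal (W (2 * (l1 + l2) / c))) \<partial>lborel)"
    using \<open>l1 \<ge> 0\<close> \<open>l2 \<ge> 0\<close>
    by (intro mult_left_mono nn_integral_mono nn_integral_resonant_set_fibre_le W \<open>c > 0\<close>) simp_all
  also have "\<dots> = ennreal (2 * min l1 l2) * emeasure lborel I * (2 * ennreal (W (2 * (l1 + l2) / c)))"
    by (simp add: nn_integral_multc mult.assoc)
  finally show ?thesis .
qed

end

lemma conv_integrand_nonzero_subset_interaction_set:
  fixes f1 f2 :: "real \<times> real \<times> 'b::{ab_group_add, topological_space} \<Rightarrow> complex"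
  assumes xi_supp: "(\<lambda>(\<tau>, \<xi>, \<eta>). \<xi>) ` supp f1 \<subseteq> I"
    and near1: "\<forall>(\<tau>, \<xi>, \<eta>) \<in> supp f1. \<bar>\<tau> - omega_alpha \<alpha> \<xi> (\<iota> \<eta>)\<bar> \<le> l1"
    and near2: "\<forall>(\<tau>, \<xi>, \<eta>) \<in> supp f2. \<bar>\<tau> - omega_alpha \<alpha> \<xi> (\<iota> \<eta>)\<bar> \<le> l2"
    and transversal: "\<forall>\<xi> \<eta> \<xi>1 \<eta>1.
      (\<xi>1, \<eta>1) \<in> (\<lambda>(\<tau>, \<xi>, \<eta>). (\<xi>, \<eta>)) ` supp f1 \<and>
      (\<xi> - \<xi>1, \<eta> - \<eta>1) \<in> (\<lambda>(\<tau>, \<xi>, \<eta>). (\<xi>, \<eta>)) ` supp f2 \<longrightarrow>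
      c \<le> \<bar>d_eta_omega \<xi>1 (\<iota> \<eta>1) - d_eta_omega (\<xi> - \<xi>1) (\<iota> (\<eta> - \<eta>1))\<bar>"
  shows "{y. f1 y \<noteq> 0 \<and> f2 (x - y) \<noteq> 0} \<subseteq> interaction_set \<alpha> \<iota> I l1 l2 c x"
proof
  fix y assume "y \<in> {y. f1 y \<noteq> 0 \<and> f2 (x - y) \<noteq> 0}"
  then have "y \<in> supp f1" "x - y \<in> supp f2"
    unfolding supp_def by (auto intro: closure_subset[THEN subsetD])
  moreover obtain \<tau> \<xi> \<eta> \<tau>1 \<xi>1 \<eta>1 where x: "x = (\<tau>, \<xi>, \<eta>)" and y: "y = (\<tau>1, \<xi>1, \<eta>1)"
    by (cases x, cases y)
  ultimately have y1: "(\<tau>1, \<xi>1, \<eta>1) \<in> supp f1" and y2: "(\<tau> - \<tau>1, \<xi> - \<xi>1, \<eta> - \<eta>1) \<in> supp f2"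
    by simp_all
  have "\<xi>1 \<in> I"
    using xi_supp y1 by force
  moreover have "c \<le> \<bar>d_eta_omega \<xi>1 (\<iota> \<eta>1) - d_eta_omega (\<xi> - \<xi>1) (\<iota> (\<eta> - \<eta>1))\<bar>"
    using transversal y1 y2 by force
  ultimately show "y \<in> interaction_set \<alpha> \<iota> I l1 l2 c x"
    using near1 y1 near2 y2 by (auto simp: interaction_set_def x y)
qed

lemma L2sq_conv_le_transversal:
  fixes N :: "'b::{ab_group_add, topological_space} measure"
    and f1 f2 :: "real \<times> real \<times> 'b \<Rightarrow> complex"
  assumes "translation_invariant_measure N"
    and \<iota>_measurable: "\<iota> \<in> borel_measurable N" and \<iota>_diff: "\<And>a b. \<iota> (a - b) = \<iota> a - \<iota> b"
    and W: "\<And>u D. D \<ge> 0 \<Longrightarrow> emeasure N (\<iota> -` cball u D) \<le> ennreal (W D)"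
      \<comment> \<open>\<open>W D = 2 * D\<close> for \<open>\<eta> \<in> \<real>\<close>, \<open>W D = 2 * D + 1\<close> for \<open>\<eta> \<in> \<int>\<close>\<close>
    and W_nonneg: "\<And>D. D \<ge> 0 \<Longrightarrow> W D \<ge> 0"
    and "c > 0" and "l1 \<ge> 0" and "l2 \<ge> 0"
    and f1: "f1 \<in> borel_measurable (lborel \<Otimes>\<^sub>M (lborel \<Otimes>\<^sub>M N))"
    and f2: "f2 \<in> borel_measurable (lborel \<Otimes>\<^sub>M (lborel \<Otimes>\<^sub>M N))"
    and xi_supp: "(\<lambda>(\<tau>, \<xi>, \<eta>). \<xi>) ` supp f1 \<subseteq> {a..b}" and "b - a \<le> \<Lambda>"
    and near1: "\<forall>(\<tau>, \<xi>, \<eta>) \<in> supp f1. \<bar>\<tau> - omega_alpha \<alpha> \<xi> (\<iota> \<eta>)\<bar> \<le> l1"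
    and near2: "\<forall>(\<tau>, \<xi>, \<eta>) \<in> supp f2. \<bar>\<tau> - omega_alpha \<alpha> \<xi> (\<iota> \<eta>)\<bar> \<le> l2"
    and transversal: "\<forall>\<xi> \<eta> \<xi>1 \<eta>1.
      (\<xi>1, \<eta>1) \<in> (\<lambda>(\<tau>, \<xi>, \<eta>). (\<xi>, \<eta>)) ` supp f1 \<and>
      (\<xi> - \<xi>1, \<eta> - \<eta>1) \<in> (\<lambda>(\<tau>, \<xi>, \<eta>). (\<xi>, \<eta>)) ` supp f2 \<longrightarrow>
      c \<le> \<bar>d_eta_omega \<xi>1 (\<iota> \<eta>1) - d_eta_omega (\<xi> - \<xi>1) (\<iota> (\<eta> - \<eta>1))\<bar>"
  shows "L2sq (lborel \<Otimes>\<^sub>M (lborel \<Otimes>\<^sub>M N)) (conv (lborel \<Otimes>\<^sub>M (lborel \<Otimes>\<^sub>M N)) f1 f2)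
    \<le> ennreal (4 * min l1 l2 * \<Lambda> * W (2 * (l1 + l2) / c))
      * L2sq (lborel \<Otimes>\<^sub>M (lborel \<Otimes>\<^sub>M N)) f1 * L2sq (lborel \<Otimes>\<^sub>M (lborel \<Otimes>\<^sub>M N)) f2"
proof -
  interpret N: translation_invariant_measure N by fact
  interpret P: translation_invariant_measure "lborel \<Otimes>\<^sub>M (lborel \<Otimes>\<^sub>M N) :: (real \<times> real \<times> 'b) measure"
    by (intro translation_invariant_measure_pair translation_invariant_measure_lborel \<open>translation_invariant_measure N\<close>)
  define D where "D = 2 * (l1 + l2) / c"
  have "W D \<ge> 0"
    using W_nonneg \<open>c > 0\<close> \<open>l1 \<ge> 0\<close> \<open>l2 \<ge> 0\<close> by (simp add: D_def)
  have "emeasure lborel {a..b} \<le> ennreal \<Lambda>"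
    using \<open>b - a \<le> \<Lambda>\<close> by (simp add: emeasure_lborel_Icc_eq ennreal_leI)
  have "emeasure (lborel \<Otimes>\<^sub>M (lborel \<Otimes>\<^sub>M N)) {y. f1 y \<noteq> 0 \<and> f2 (x - y) \<noteq> 0}
      \<le> ennreal (4 * min l1 l2 * \<Lambda> * W D)" for x
  proof -
    have "emeasure (lborel \<Otimes>\<^sub>M (lborel \<Otimes>\<^sub>M N)) {y. f1 y \<noteq> 0 \<and> f2 (x - y) \<noteq> 0}
        \<le> emeasure (lborel \<Otimes>\<^sub>M (lborel \<Otimes>\<^sub>M N)) (interaction_set \<alpha> \<iota> {a..b} l1 l2 c x)"
      using conv_integrand_nonzero_subset_interaction_set[OF xi_supp near1 near2 transversal]
      by (intro emeasure_mono N.interaction_set_in_sets \<iota>_measurable) auto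
    also have "\<dots> \<le> ennreal (2 * min l1 l2) * emeasure lborel {a..b} * (2 * ennreal (W D))"
      unfolding D_def
      by (rule N.emeasure_interaction_set_le[OF \<iota>_measurable _ \<iota>_diff W \<open>c > 0\<close> \<open>l1 \<ge> 0\<close> \<open>l2 \<ge> 0\<close>]) simp
    also have "\<dots> \<le> ennreal (2 * min l1 l2) * ennreal \<Lambda> * (2 * ennreal (W D))"
      using \<open>emeasure lborel {a..b} \<le> ennreal \<Lambda>\<close> by (intro mult_right_mono mult_left_mono) auto
    also have "\<dots> = ennreal (4 * min l1 l2 * \<Lambda> * W D)"
      using \<open>l1 \<ge> 0\<close> \<open>l2 \<ge> 0\<close> \<open>W D \<ge> 0\<close>
      by (simp add: ennreal_mult' ennreal_mult'' mult_ac)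
    finally show ?thesis .
  qed
  then show ?thesis
    unfolding D_def by (rule P.L2sq_conv_le[OF f1 f2])
qed


lemma add_one_le_two_japanese: "r + 1 \<le> 2 * japanese r"
proof -
  have "(r + 1)\<^sup>2 = 4 * (1 + r\<^sup>2) - (2 * r\<^sup>2 + (r - 1)\<^sup>2 + 2)"
    by (simp add: power2_eq_square algebra_simps)
  also have "\<dots> \<le> 4 * (1 + r\<^sup>2)"
    using zero_le_power2[of "r - 1"] zero_le_power2[of r] by linarith
  finally have "((r + 1) / 2)\<^sup>2 \<le> 1 + r\<^sup>2"
    by (simp add: power_divide)
  then show ?thesis
    unfolding japanese_def using real_le_rsqrt by fastforce
qed

lemma dyadic_Z_pos: "dyadic_Z N \<Longrightarrow> N > 0"
  by (auto simp: dyadic_Z_def)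

lemma dyadic_N0_pos: "dyadic_N0 L \<Longrightarrow> L > 0"
  by (auto simp: dyadic_N0_def)

lemma bilinear_estimate_R2:
  fixes f1 f2 :: "real \<times> real \<times> real \<Rightarrow> complex"
  assumes "cI > 0" and "cL > 0" and "cT > 0"
    and "dyadic_Z N1" and "dyadic_Z N2" and "dyadic_N0 L1" and "dyadic_N0 L2"
    and f1: "f1 \<in> borel_measurable M_R2" and f2: "f2 \<in> borel_measurable M_R2"
    and xi_supp: "(\<lambda>(\<tau>, \<xi>, \<eta>). \<xi>) ` supp f1 \<subseteq> {a..b}" and xi_length: "b - a \<le> cI * min N1 N2"
    and near1: "\<forall>(\<tau>, \<xi>, \<eta>) \<in> supp f1. \<bar>\<tau> - omega_alpha \<alpha> \<xi> \<eta>\<bar> \<le> cL * L1"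
    and near2: "\<forall>(\<tau>, \<xi>, \<eta>) \<in> supp f2. \<bar>\<tau> - omega_alpha \<alpha> \<xi> \<eta>\<bar> \<le> cL * L2"
    and transversal: "\<forall>\<xi> \<eta> \<xi>1 \<eta>1.
      (\<xi>1, \<eta>1) \<in> (\<lambda>(\<tau>, \<xi>, \<eta>). (\<xi>, \<eta>)) ` supp f1 \<and>
      (\<xi> - \<xi>1, \<eta> - \<eta>1) \<in> (\<lambda>(\<tau>, \<xi>, \<eta>). (\<xi>, \<eta>)) ` supp f2 \<longrightarrow>
      \<bar>d_eta_omega \<xi>1 \<eta>1 - d_eta_omega (\<xi> - \<xi>1) (\<eta> - \<eta>1)\<bar> \<ge> cT * max N1 N2 powr (\<alpha> / 2)"
  shows "L2sq M_R2 (conv M_R2 f1 f2)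
    \<le> ennreal (32 * cL\<^sup>2 * cI / cT * min N1 N2 * min L1 L2 * (C1_R2 \<alpha> (max L1 L2) (max N1 N2))\<^sup>2)
      * L2sq M_R2 f1 * L2sq M_R2 f2"
proof -
  have "N1 > 0" "N2 > 0" "L1 > 0" "L2 > 0"
    using assms(4-7) by (simp_all add: dyadic_Z_pos dyadic_N0_pos)
  define P where "P = max N1 N2 powr (\<alpha> / 2)"
  have "P > 0"
    using \<open>N1 > 0\<close> by (simp add: P_def)
  have min_cL: "min (cL * L1) (cL * L2) = cL * min L1 L2"
    using \<open>cL > 0\<close> by (simp add: min_def)
  have "L2sq M_R2 (conv M_R2 f1 f2)
      \<le> ennreal (4 * min (cL * L1) (cL * L2) * (cI * min N1 N2) * (2 * (2 * (cL * L1 + cL * L2) / (cT * P))))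
        * L2sq M_R2 f1 * L2sq M_R2 f2"
    using L2sq_conv_le_transversal[OF translation_invariant_measure_lborel, where \<iota> = "\<lambda>x. x"
        and W = "\<lambda>D. 2 * D", OF _ _ emeasure_preimage_cball_real_le _ _ _ _ _ _ xi_supp xi_length]
      f1 f2 near1 near2 transversal \<open>cL > 0\<close> \<open>cT > 0\<close> \<open>P > 0\<close> \<open>L1 > 0\<close> \<open>L2 > 0\<close>
    unfolding M_R2_def P_def by simp
  also have "4 * min (cL * L1) (cL * L2) * (cI * min N1 N2) * (2 * (2 * (cL * L1 + cL * L2) / (cT * P)))
      = 4 * cL * cI * min N1 N2 * min L1 L2 * (4 * cL / cT * ((L1 + L2) / P))"
    unfolding min_cL using \<open>cT > 0\<close> \<open>P > 0\<close> by (simp add: field_simps)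
  also have "\<dots> \<le> 4 * cL * cI * min N1 N2 * min L1 L2 * (8 * cL / cT * (max L1 L2 / P))"
    using \<open>cI > 0\<close> \<open>cL > 0\<close> \<open>cT > 0\<close> \<open>P > 0\<close> \<open>N1 > 0\<close> \<open>N2 > 0\<close> \<open>L1 > 0\<close> \<open>L2 > 0\<close>
    by (intro mult_left_mono) (simp_all add: divide_right_mono)
  also have "\<dots> = 32 * cL\<^sup>2 * cI / cT * min N1 N2 * min L1 L2 * (C1_R2 \<alpha> (max L1 L2) (max N1 N2))\<^sup>2"
    using \<open>P > 0\<close> \<open>L1 > 0\<close> by (simp add: C1_R2_def P_def power2_eq_square)
  finally show ?thesis
    by (simp add: ennreal_leI mult_right_mono)
qed


lemma bilinear_estimate_RT:
  fixes f1 f2 :: "real \<times> real \<times> int \<Rightarrow> complex"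
  assumes "cI > 0" and "cL > 0" and "cT > 0"
    and "dyadic_Z N1" and "dyadic_Z N2" and "dyadic_N0 L1" and "dyadic_N0 L2"
    and f1: "f1 \<in> borel_measurable M_RT" and f2: "f2 \<in> borel_measurable M_RT"
    and xi_supp: "(\<lambda>(\<tau>, \<xi>, \<eta>). \<xi>) ` supp f1 \<subseteq> {a..b}" and xi_length: "b - a \<le> cI * min N1 N2"
    and near1: "\<forall>(\<tau>, \<xi>, \<eta>) \<in> supp f1. \<bar>\<tau> - omega_alpha \<alpha> \<xi> (real_of_int \<eta>)\<bar> \<le> cL * L1"
    and near2: "\<forall>(\<tau>, \<xi>, \<eta>) \<in> supp f2. \<bar>\<tau> - omega_alpha \<alpha> \<xi> (real_of_int \<eta>)\<bar> \<le> cL * L2"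
    and transversal: "\<forall>\<xi> (\<eta>::int) \<xi>1 (\<eta>1::int).
      (\<xi>1, \<eta>1) \<in> (\<lambda>(\<tau>, \<xi>, \<eta>). (\<xi>, \<eta>)) ` supp f1 \<and>
      (\<xi> - \<xi>1, \<eta> - \<eta>1) \<in> (\<lambda>(\<tau>, \<xi>, \<eta>). (\<xi>, \<eta>)) ` supp f2 \<longrightarrow>
      \<bar>d_eta_omega \<xi>1 (real_of_int \<eta>1) - d_eta_omega (\<xi> - \<xi>1) (real_of_int (\<eta> - \<eta>1))\<bar>
        \<ge> cT * max N1 N2 powr (\<alpha> / 2)"
  shows "L2sq M_RT (conv M_RT f1 f2)
    \<le> ennreal (8 * cL * cI * (8 * cL / cT + 1) * min N1 N2 * min L1 L2
        * (C1_RT \<alpha> (max L1 L2) (max N1 N2))\<^sup>2) * L2sq M_RT f1 * L2sq M_RT f2"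
proof -
  have "N1 > 0" "N2 > 0" "L1 > 0" "L2 > 0"
    using assms(4-7) by (simp_all add: dyadic_Z_pos dyadic_N0_pos)
  define P where "P = max N1 N2 powr (\<alpha> / 2)"
  have "P > 0"
    using \<open>N1 > 0\<close> by (simp add: P_def)
  define r where "r = max L1 L2 / P"
  have "r \<ge> 0"
    using \<open>P > 0\<close> \<open>L1 > 0\<close> by (simp add: r_def)
  define k where "k = 8 * cL / cT"
  have "k \<ge> 0"
    using \<open>cL > 0\<close> \<open>cT > 0\<close> by (simp add: k_def)
  have min_cL: "min (cL * L1) (cL * L2) = cL * min L1 L2"
    using \<open>cL > 0\<close> by (simp add: min_def)
  have nonneg: "0 \<le> 4 * cL * cI * min N1 N2 * min L1 L2"
    using \<open>cI > 0\<close> \<open>cL > 0\<close> \<open>N1 > 0\<close> \<open>N2 > 0\<close> \<open>L1 > 0\<close> \<open>L2 > 0\<close> by simp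
  have "L2sq M_RT (conv M_RT f1 f2)
      \<le> ennreal (4 * min (cL * L1) (cL * L2) * (cI * min N1 N2) * (2 * (2 * (cL * L1 + cL * L2) / (cT * P)) + 1))
        * L2sq M_RT f1 * L2sq M_RT f2"
    using L2sq_conv_le_transversal[OF translation_invariant_measure_count_space_int, where \<iota> = real_of_int
        and W = "\<lambda>D. 2 * D + 1", OF _ _ emeasure_preimage_cball_int_le _ _ _ _ _ _ xi_supp xi_length]
      f1 f2 near1 near2 transversal \<open>cL > 0\<close> \<open>cT > 0\<close> \<open>P > 0\<close> \<open>L1 > 0\<close> \<open>L2 > 0\<close>
    unfolding M_RT_def P_def by simp
  also have "4 * min (cL * L1) (cL * L2) * (cI * min N1 N2) * (2 * (2 * (cL * L1 + cL * L2) / (cT * P)) + 1)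
      = 4 * cL * cI * min N1 N2 * min L1 L2 * (k / 2 * ((L1 + L2) / P) + 1)"
    unfolding min_cL k_def using \<open>cT > 0\<close> \<open>P > 0\<close> by (simp add: field_simps)
  also have "\<dots> \<le> 4 * cL * cI * min N1 N2 * min L1 L2 * (k * r + 1)"
  proof (rule mult_left_mono[OF _ nonneg])
    have "L1 + L2 \<le> 2 * max L1 L2"
      by (simp add: max_def)
    then have "(L1 + L2) / P \<le> 2 * r"
      using divide_right_mono[of "L1 + L2" "2 * max L1 L2" P] \<open>P > 0\<close> by (simp add: r_def)
    then show "k / 2 * ((L1 + L2) / P) + 1 \<le> k * r + 1"
      using mult_left_mono[of "(L1 + L2) / P" "2 * r" "k / 2"] \<open>k \<ge> 0\<close> by simp
  qed
  also have "\<dots> \<le> 4 * cL * cI * min N1 N2 * min L1 L2 * ((k + 1) * (2 * japanese r))"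
  proof (rule mult_left_mono[OF _ nonneg])
    have "k * r + 1 \<le> (k + 1) * (r + 1)"
      using \<open>k \<ge> 0\<close> \<open>r \<ge> 0\<close> by (simp add: algebra_simps)
    also have "\<dots> \<le> (k + 1) * (2 * japanese r)"
      using \<open>k \<ge> 0\<close> add_one_le_two_japanese[of r] by (intro mult_left_mono) simp_all
    finally show "k * r + 1 \<le> (k + 1) * (2 * japanese r)" .
  qed
  also have "\<dots> = 8 * cL * cI * (8 * cL / cT + 1) * min N1 N2 * min L1 L2
      * (C1_RT \<alpha> (max L1 L2) (max N1 N2))\<^sup>2"
    by (simp add: C1_RT_def japanese_def r_def P_def k_def)
  finally show ?thesis
    by (simp add: ennreal_leI mult_right_mono)
qed

theorem proposition4p1:
  fixes \<alpha> cI cL cT :: real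
  assumes "\<alpha> \<ge> 2" and "cI > 0" and "cL > 0" and "cT > 0"
  shows
   "(\<exists>C>0. \<forall>(N1::real) (N2::real) (L1::real) (L2::real)
          (f1::real \<times> real \<times> real \<Rightarrow> complex) (f2::real \<times> real \<times> real \<Rightarrow> complex).
      dyadic_Z N1 \<and> dyadic_Z N2 \<and> dyadic_N0 L1 \<and> dyadic_N0 L2 \<and>
      f1 \<in> borel_measurable M_R2 \<and> f2 \<in> borel_measurable M_R2 \<and>
      (\<exists>a b. (\<lambda>(\<tau>,\<xi>,\<eta>). \<xi>) ` supp f1 \<subseteq> {a..b} \<and> b - a \<le> cI * min N1 N2) \<and>
      (\<exists>a b. (\<lambda>(\<tau>,\<xi>,\<eta>). \<xi>) ` supp f2 \<subseteq> {a..b} \<and> b - a \<le> cI * min N1 N2) \<and>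
      (\<forall>(\<tau>,\<xi>,\<eta>) \<in> supp f1. \<bar>\<tau> - omega_alpha \<alpha> \<xi> \<eta>\<bar> \<le> cL * L1) \<and>
      (\<forall>(\<tau>,\<xi>,\<eta>) \<in> supp f2. \<bar>\<tau> - omega_alpha \<alpha> \<xi> \<eta>\<bar> \<le> cL * L2) \<and>
      (\<forall>\<xi> \<eta> \<xi>1 \<eta>1.
          (\<xi>1, \<eta>1) \<in> (\<lambda>(\<tau>,\<xi>,\<eta>). (\<xi>,\<eta>)) ` supp f1 \<and>
          (\<xi> - \<xi>1, \<eta> - \<eta>1) \<in> (\<lambda>(\<tau>,\<xi>,\<eta>). (\<xi>,\<eta>)) ` supp f2 \<longrightarrow>
          \<bar>d_eta_omega \<xi>1 \<eta>1 - d_eta_omega (\<xi> - \<xi>1) (\<eta> - \<eta>1)\<bar>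
             \<ge> cT * max N1 N2 powr (\<alpha>/2))
      \<longrightarrow> L2sq M_R2 (conv M_R2 f1 f2)
          \<le> ennreal (C\<^sup>2 * min N1 N2 * min L1 L2 * (C1_R2 \<alpha> (max L1 L2) (max N1 N2))\<^sup>2)
             * L2sq M_R2 f1 * L2sq M_R2 f2)
  \<and> (\<exists>C>0. \<forall>(N1::real) (N2::real) (L1::real) (L2::real)
          (f1::real \<times> real \<times> int \<Rightarrow> complex) (f2::real \<times> real \<times> int \<Rightarrow> complex).
      dyadic_Z N1 \<and> dyadic_Z N2 \<and> dyadic_N0 L1 \<and> dyadic_N0 L2 \<and>
      f1 \<in> borel_measurable M_RT \<and> f2 \<in> borel_measurable M_RT \<and>
      (\<exists>a b. (\<lambda>(\<tau>,\<xi>,\<eta>). \<xi>) ` supp f1 \<subseteq> {a..b} \<and> b - a \<le> cI * min N1 N2) \<and>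
      (\<exists>a b. (\<lambda>(\<tau>,\<xi>,\<eta>). \<xi>) ` supp f2 \<subseteq> {a..b} \<and> b - a \<le> cI * min N1 N2) \<and>
      (\<forall>(\<tau>,\<xi>,\<eta>) \<in> supp f1. \<bar>\<tau> - omega_alpha \<alpha> \<xi> (real_of_int \<eta>)\<bar> \<le> cL * L1) \<and>
      (\<forall>(\<tau>,\<xi>,\<eta>) \<in> supp f2. \<bar>\<tau> - omega_alpha \<alpha> \<xi> (real_of_int \<eta>)\<bar> \<le> cL * L2) \<and>
      (\<forall>\<xi> (\<eta>::int) \<xi>1 (\<eta>1::int).
          (\<xi>1, \<eta>1) \<in> (\<lambda>(\<tau>,\<xi>,\<eta>). (\<xi>,\<eta>)) ` supp f1 \<and>
          (\<xi> - \<xi>1, \<eta> - \<eta>1) \<in> (\<lambda>(\<tau>,\<xi>,\<eta>). (\<xi>,\<eta>)) ` supp f2 \<longrightarrow>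
          \<bar>d_eta_omega \<xi>1 (real_of_int \<eta>1) - d_eta_omega (\<xi> - \<xi>1) (real_of_int (\<eta> - \<eta>1))\<bar>
             \<ge> cT * max N1 N2 powr (\<alpha>/2))
      \<longrightarrow> L2sq M_RT (conv M_RT f1 f2)
          \<le> ennreal (C\<^sup>2 * min N1 N2 * min L1 L2 * (C1_RT \<alpha> (max L1 L2) (max N1 N2))\<^sup>2)
             * L2sq M_RT f1 * L2sq M_RT f2)"
proof -
  have pos: "0 < 32 * cL\<^sup>2 * cI / cT" "0 < 8 * cL * cI * (8 * cL / cT + 1)"
    using assms(2-4) by (simp_all add: add_pos_pos)
  show ?thesis
    by (intro conjI[OF exI[of _ "sqrt (32 * cL\<^sup>2 * cI / cT)"] exI[of _ "sqrt (8 * cL * cI * (8 * cL / cT + 1))"]]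
        conjI allI impI real_sqrt_gt_zero pos; elim conjE exE)
      (simp_all only: real_sqrt_pow2 less_imp_le[OF pos(1)] less_imp_le[OF pos(2)]
        bilinear_estimate_R2[OF assms(2-4)] bilinear_estimate_RT[OF assms(2-4)])
qed

end
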